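(* Let $X$ be an irreducible positive recurrent Markov chain on a countable state space $S$ with transition matrix $P$ and stationary distribution $\pi$. Let $K\subseteq A\subseteq S$ be finite with $K$ nonempty, $A'=A\setminus K$, $T_K=\inf\{n\ge1:X_n\in K\}$, $T=\inf\{n\ge1:X_n\notin A\}$. Let $G(x,y)=P_x(X_{T_K}=y,\,T_K<T)$ for $x,y\in K$; assume $G$ is irreducible and $I-G$ is nonsingular. For $x\in K$ define the probability $\tau_x$ on $K$ by $\tau_x(y)=(I-G)^{-1}(x,y)/\sum_{w\in K}(I-G)^{-1}(x,w)$. Let $r:S\to[0,\infty)$ and suppose there are non-negative functions $g_1,g_2$ on $K^c$ and $h_1,h_2$ on $A$ such that for all $x\in K^c$ $$\sum_{y\in K^c}P(x,y)g_1(y)\le g_1(x)-r(x),\qquad \sum_{y\in K^c}P(x,y)g_2(y)\le g_2(x)-1,$$ and for all $x\in A$ and $i=1,2$, $\sum_{y\in A^c}P(x,y)g_i(y)\le h_i(x)$. Write $h_i=(h_{i1},h_{i2})$ for its restrictions to $K$ and $A'$. For $x\in K$ and a non-negative function $w$ set $\underline\kappa(x,w)=w(x)+(P_{12}(I-P_{22})^{-1}w_2)(x)$, $\tilde\kappa_1(x,r)=\underline\kappa(x,r)+h_{11}(x)+(P_{12}(I-P_{22})^{-1}h_{12})(x)$, $\tilde\kappa_2(x,e)=\underline\kappa(x,e)+h_{21}(x)+(P_{12}(I-P_{22})^{-1}h_{22})(x)$, where $e\equiv1$, and regard these as column vectors indexed by $K$. Then $$\frac{\min_{x\in K}\tau_x\underline\kappa(r)}{\max_{x\in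 K}\tau_x\tilde\kappa_2(e)}\le \pi r\le\frac{\max_{x\in K}\tau_x\tilde\kappa_1(r)}{\min_{x\in K}\tau_x\underline\kappa(e)}.$$ Moreover, if $\pi_2$ is the stationary distribution of the row-normalized matrix $P_2(x,y)=G(x,y)/\sum_{y'\in K}G(x,y')$ and $\tilde\pi_2(r)=\pi_2\underline\kappa(r)/\pi_2\underline\kappa(e)$, then $\tilde\pi_2(r)$ lies between the same two bounds, so that $|\tilde\pi_2(r)-\pi r|$ is at most the difference of the upper and lower bounds.
   Context: $P_x$ is the law of the chain started at $x$. $P$ is written in block form with respect to $(K,A',A^c)$ as $(P_{ij})_{i,j=1}^3$; $P_{12}$ is the $K\times A'$ block, $P_{22}$ the $A'\times A'$ block, and $w_2$ denotes the restriction of $w$ to $A'$; $I-P_{22}$ is invertible in this setting. Note $\underline\kappa(x,w)=E_x\sum_{j=0}^{(T\wedge T_K)-1}w(X_j)$. For a row vector $\phi$ on $K$ and column vector $q$ on $K$, $\phi q=\sum_{x\in K}\phi(x)q(x)$; $\pi r=\sum_x\pi(x)r(x)$. *)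

theory Defs
  imports "HOL-Analysis.Analysis"
begin

definition stochastic :: "('a \<Rightarrow> 'a \<Rightarrow> real) \<Rightarrow> bool" where
  "stochastic P \<longleftrightarrow> (\<forall>x y. P x y \<ge> 0) \<and> (\<forall>x. (P x has_sum 1) UNIV)"

definition irreducible_chain :: "('a \<Rightarrow> 'a \<Rightarrow> real) \<Rightarrow> bool" where
  "irreducible_chain P \<longleftrightarrow> (\<forall>x y. (x, y) \<in> {(a, b). P a b > 0}\<^sup>*)"

text \<open>Taboo probabilities: taboo P H n x y = P_x(X_1,...,X_n \<in> H, X_(n+1) = y).\<close>
fun taboo :: "('a \<Rightarrow> 'a \<Rightarrow> real) \<Rightarrow> 'a set \<Rightarrow> nat \<Rightarrow> 'a \<Rightarrow> 'a \<Rightarrow> real" where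
  "taboo P H 0 x y = P x y"
| "taboo P H (Suc n) x y = infsum (\<lambda>z. P x z * taboo P H n z y) H"

text \<open>Positive recurrence of every state: with first-return probabilities
  f_x(n+1) = P_x(T_x = n+1) = taboo P (-{x}) n x x, we require P_x(T_x < \<infinity>) = 1
  and E_x T_x < \<infinity>.\<close>
definition positive_recurrent :: "('a \<Rightarrow> 'a \<Rightarrow> real) \<Rightarrow> bool" where
  "positive_recurrent P \<longleftrightarrow>
     (\<forall>x. (\<lambda>n. taboo P (-{x}) n x x) sums 1 \<and>
          summable (\<lambda>n. real (Suc n) * taboo P (-{x}) n x x))"

definition stationary_dist :: "('a \<Rightarrow> 'a \<Rightarrow> real) \<Rightarrow> ('a \<Rightarrow> real) \<Rightarrow> bool" where
  "stationary_dist P \<pi> \<longleftrightarrow> (\<forall>x. \<pi> x \<ge> 0) \<and> (\<pi> has_sum 1) UNIV \<and>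
     (\<forall>y. ((\<lambda>x. \<pi> x * P x y) has_sum \<pi> y) UNIV)"

text \<open>G(x,y) = P_x(X_{T_K} = y, T_K < T): sum over n of the probabilities that
  X_1..X_n lie in A' = A - K and X_(n+1) = y.\<close>
definition exit_G :: "('a \<Rightarrow> 'a \<Rightarrow> real) \<Rightarrow> 'a set \<Rightarrow> 'a set \<Rightarrow> 'a \<Rightarrow> 'a \<Rightarrow> real" where
  "exit_G P K A x y = (\<Sum>n. taboo P (A - K) n x y)"

definition idm :: "'a \<Rightarrow> 'a \<Rightarrow> real" where
  "idm x y = (if x = y then 1 else 0)"

definition is_inverse_on :: "'a set \<Rightarrow> ('a \<Rightarrow> 'a \<Rightarrow> real) \<Rightarrow> ('a \<Rightarrow> 'a \<Rightarrow> real) \<Rightarrow> bool" where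
  "is_inverse_on S M N \<longleftrightarrow>
     (\<forall>x\<in>S. \<forall>y\<in>S. (\<Sum>z\<in>S. M x z * N z y) = idm x y) \<and>
     (\<forall>x\<in>S. \<forall>y\<in>S. (\<Sum>z\<in>S. N x z * M z y) = idm x y)"

definition nonsingular_on :: "'a set \<Rightarrow> ('a \<Rightarrow> 'a \<Rightarrow> real) \<Rightarrow> bool" where
  "nonsingular_on S M \<longleftrightarrow> (\<exists>N. is_inverse_on S M N)"

definition inv_on :: "'a set \<Rightarrow> ('a \<Rightarrow> 'a \<Rightarrow> real) \<Rightarrow> 'a \<Rightarrow> 'a \<Rightarrow> real" where
  "inv_on S M = (THE N. is_inverse_on S M N \<and> (\<forall>x y. x \<notin> S \<or> y \<notin> S \<longrightarrow> N x y = 0))"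

definition irreducible_on :: "'a set \<Rightarrow> ('a \<Rightarrow> 'a \<Rightarrow> real) \<Rightarrow> bool" where
  "irreducible_on S M \<longleftrightarrow> (\<forall>x\<in>S. \<forall>y\<in>S. (x, y) \<in> {(a, b). a \<in> S \<and> b \<in> S \<and> M a b > 0}\<^sup>*)"

definition p12N :: "('a \<Rightarrow> 'a \<Rightarrow> real) \<Rightarrow> 'a set \<Rightarrow> 'a set \<Rightarrow> ('a \<Rightarrow> real) \<Rightarrow> 'a \<Rightarrow> real" where
  "p12N P K A v x =
     (\<Sum>z\<in>A - K. P x z * (\<Sum>u\<in>A - K. inv_on (A - K) (\<lambda>a b. idm a b - P a b) z u * v u))"

definition kappa_low :: "('a \<Rightarrow> 'a \<Rightarrow> real) \<Rightarrow> 'a set \<Rightarrow> 'a set \<Rightarrow> ('a \<Rightarrow> real) \<Rightarrow> 'a \<Rightarrow> real" where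
  "kappa_low P K A w x = w x + p12N P K A w x"

definition kappa_tilde :: "('a \<Rightarrow> 'a \<Rightarrow> real) \<Rightarrow> 'a set \<Rightarrow> 'a set \<Rightarrow> ('a \<Rightarrow> real) \<Rightarrow> ('a \<Rightarrow> real) \<Rightarrow> 'a \<Rightarrow> real" where
  "kappa_tilde P K A w h x = kappa_low P K A w x + h x + p12N P K A h x"

definition tau :: "('a \<Rightarrow> 'a \<Rightarrow> real) \<Rightarrow> 'a set \<Rightarrow> 'a set \<Rightarrow> 'a \<Rightarrow> 'a \<Rightarrow> real" where
  "tau P K A x y =
     (let M = inv_on K (\<lambda>a b. idm a b - exit_G P K A a b)
      in M x y / (\<Sum>w\<in>K. M x w))"

definition tau_dot :: "('a \<Rightarrow> 'a \<Rightarrow> real) \<Rightarrow> 'a set \<Rightarrow> 'a set \<Rightarrow> 'a \<Rightarrow> ('a \<Rightarrow> real) \<Rightarrow> real" where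
  "tau_dot P K A x q = (\<Sum>y\<in>K. tau P K A x y * q y)"

definition lower_bound :: "('a \<Rightarrow> 'a \<Rightarrow> real) \<Rightarrow> 'a set \<Rightarrow> 'a set \<Rightarrow> ('a \<Rightarrow> real) \<Rightarrow> ('a \<Rightarrow> real) \<Rightarrow> real" where
  "lower_bound P K A r h2 =
     Min ((\<lambda>x. tau_dot P K A x (kappa_low P K A r)) ` K) /
     Max ((\<lambda>x. tau_dot P K A x (kappa_tilde P K A (\<lambda>_. 1) h2)) ` K)"

definition upper_bound :: "('a \<Rightarrow> 'a \<Rightarrow> real) \<Rightarrow> 'a set \<Rightarrow> 'a set \<Rightarrow> ('a \<Rightarrow> real) \<Rightarrow> ('a \<Rightarrow> real) \<Rightarrow> real" where
  "upper_bound P K A r h1 =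
     Max ((\<lambda>x. tau_dot P K A x (kappa_tilde P K A r h1)) ` K) /
     Min ((\<lambda>x. tau_dot P K A x (kappa_low P K A (\<lambda>_. 1))) ` K)"

definition P2 :: "('a \<Rightarrow> 'a \<Rightarrow> real) \<Rightarrow> 'a set \<Rightarrow> 'a set \<Rightarrow> 'a \<Rightarrow> 'a \<Rightarrow> real" where
  "P2 P K A x y = exit_G P K A x y / (\<Sum>y'\<in>K. exit_G P K A x y')"

definition stationary_on :: "'a set \<Rightarrow> ('a \<Rightarrow> 'a \<Rightarrow> real) \<Rightarrow> ('a \<Rightarrow> real) \<Rightarrow> bool" where
  "stationary_on S M \<mu> \<longleftrightarrow> (\<forall>x\<in>S. \<mu> x \<ge> 0) \<and> (\<Sum>x\<in>S. \<mu> x) = 1 \<and>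
     (\<forall>y\<in>S. (\<Sum>x\<in>S. \<mu> x * M x y) = \<mu> y)"

definition pi2_tilde :: "('a \<Rightarrow> 'a \<Rightarrow> real) \<Rightarrow> 'a set \<Rightarrow> 'a set \<Rightarrow> ('a \<Rightarrow> real) \<Rightarrow> ('a \<Rightarrow> real) \<Rightarrow> real" where
  "pi2_tilde P K A \<mu> r =
     (\<Sum>x\<in>K. \<mu> x * kappa_low P K A r x) / (\<Sum>x\<in>K. \<mu> x * kappa_low P K A (\<lambda>_. 1) x)"

end

theory Submission
  imports Defs
begin

(* Let G = P11 + P12 N P21 with N = (I - P22)^-1 be the chain watched on K before it leaves A; N
   exists because g2 decreases by one per step on A'. Every row vector phi on K with phi G <= phi is
   a nonnegative mixture of the rows tau_x of (I - G)^-1: the weights come from the defect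
   phi (I - G) >= 0, and (I - G)^-1 >= 0 by the minimum principle for the irreducible substochastic
   G. Hence phi q lies between (sum phi) min_x tau_x q and (sum phi) max_x tau_x q. Both pi
   restricted to K and pi2 are such vectors. For pi and w = r or w = 1 one also has
   sum_K pi kappa_low(w) <= pi w <= sum_K pi kappa_tilde(w): the first inequality because pi,
   pushed from K through P12 N, stays below pi on A'; the second by the Foster-Lyapunov comparison
   theorem off K, after the drift function has been replaced on A' by N applied to w plus its
   expected exit value. Dividing the sandwich for w = r by the one for w = 1 gives both claims. *)

section \<open>Matrices on a finite index set\<close>

lemma sum_idm_mult:
  assumes "finite S" "x \<in> S"
  shows "(\<Sum>z\<in>S. idm x z * f z) = f x"
  using assms by (simp add: idm_def flip: of_bool_def)

lemma sum_mult_idm: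
  assumes "finite S" "y \<in> S"
  shows "(\<Sum>z\<in>S. f z * idm z y) = f y"
  using assms by (simp add: idm_def flip: of_bool_def)

lemma sum_idm_minus_mult:
  assumes "finite S" "x \<in> S"
  shows "(\<Sum>z\<in>S. (idm x z - M x z) * v z) = v x - (\<Sum>z\<in>S. M x z * v z)"
  using assms by (simp add: left_diff_distrib sum_subtractf sum_idm_mult)

lemma sum_mult_idm_minus:
  assumes "finite S" "y \<in> S"
  shows "(\<Sum>z\<in>S. v z * (idm z y - M z y)) = v y - (\<Sum>z\<in>S. v z * M z y)"
  using assms by (simp add: right_diff_distrib sum_subtractf sum_mult_idm)

lemma sum_mult_sum_assoc:
  fixes a :: "'a \<Rightarrow> real" and b :: "'a \<Rightarrow> 'b \<Rightarrow> real" and c :: "'b \<Rightarrow> real"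
  shows "(\<Sum>z\<in>A. a z * (\<Sum>w\<in>B. b z w * c w)) = (\<Sum>w\<in>B. (\<Sum>z\<in>A. a z * b z w) * c w)"
  by (simp add: sum_distrib_left sum_distrib_right mult.assoc sum.swap[of _ A])

lemma is_inverse_on_apply:
  assumes "finite S" "is_inverse_on S B M" "y \<in> S"
  shows "(\<Sum>u\<in>S. M y u * (\<Sum>z\<in>S. B u z * v z)) = v y"
proof -
  have "(\<Sum>u\<in>S. M y u * (\<Sum>z\<in>S. B u z * v z)) = (\<Sum>z\<in>S. idm y z * v z)"
    using assms(2,3) unfolding sum_mult_sum_assoc is_inverse_on_def by (intro sum.cong) auto
  then show ?thesis using assms(1,3) by (simp add: sum_idm_mult)
qed

lemma is_inverse_on_row_apply:
  assumes "finite S" "is_inverse_on S B M" "y \<in> S"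
  shows "(\<Sum>x\<in>S. (\<Sum>z\<in>S. \<phi> z * B z x) * M x y) = \<phi> y"
proof -
  have "(\<Sum>x\<in>S. (\<Sum>z\<in>S. \<phi> z * B z x) * M x y) = (\<Sum>z\<in>S. \<phi> z * idm z y)"
    using assms(2,3) unfolding sum_mult_sum_assoc[symmetric] is_inverse_on_def
    by (intro sum.cong) auto
  then show ?thesis using assms(1,3) by (simp add: sum_mult_idm)
qed

lemma is_inverse_on_unique:
  assumes "finite S" "is_inverse_on S M N1" "is_inverse_on S M N2" "x \<in> S" "y \<in> S"
  shows "N1 x y = N2 x y"
  using is_inverse_on_row_apply[OF assms(1,3,5), of "N1 x"] assms(1,2,4,5)
  by (simp add: is_inverse_on_def sum_idm_mult cong: sum.cong)

lemma inv_on_is_inverse: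
  assumes "finite S" "nonsingular_on S M"
  shows "is_inverse_on S M (inv_on S M)"
proof -
  obtain N where N: "is_inverse_on S M N"
    using assms(2) unfolding nonsingular_on_def by blast
  define N0 where "N0 x y = (if x \<in> S \<and> y \<in> S then N x y else 0)" for x y
  have N0: "is_inverse_on S M N0 \<and> (\<forall>x y. x \<notin> S \<or> y \<notin> S \<longrightarrow> N0 x y = 0)"
    using N unfolding is_inverse_on_def N0_def by (auto intro!: sum.cong)
  have "inv_on S M = N0"
    unfolding inv_on_def
  proof (rule the_equality)
    fix N' assume "is_inverse_on S M N' \<and> (\<forall>x y. x \<notin> S \<or> y \<notin> S \<longrightarrow> N' x y = 0)"
    with N0 show "N' = N0"
      using is_inverse_on_unique[OF assms(1), of M N' N0] by (intro ext) metis
  qed (rule N0)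
  then show ?thesis using N0 by simp
qed

lemma inv_on_eqI:
  assumes "finite S" "is_inverse_on S M N" "x \<in> S" "y \<in> S"
  shows "inv_on S M x y = N x y"
  using assms is_inverse_on_unique inv_on_is_inverse nonsingular_on_def by metis

lemma irreducible_superharmonic_negative_imp_stochastic:
  fixes G :: "'a \<Rightarrow> 'a \<Rightarrow> real" and v :: "'a \<Rightarrow> real"
  assumes finK: "finite K"
    and G_nonneg: "\<And>x y. x \<in> K \<Longrightarrow> y \<in> K \<Longrightarrow> G x y \<ge> 0"
    and G_rows: "\<And>x. x \<in> K \<Longrightarrow> (\<Sum>y\<in>K. G x y) \<le> 1"
    and irr: "irreducible_on K G"
    and super: "\<And>x. x \<in> K \<Longrightarrow> (\<Sum>y\<in>K. G x y * v y) \<le> v x"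
    and neg: "x0 \<in> K" "v x0 < 0"
    and i: "i \<in> K"
  shows "(\<Sum>y\<in>K. G i y) = 1"
proof -
  define m where "m = Min (v ` K)"
  have m_le: "m \<le> v z" if "z \<in> K" for z
    unfolding m_def using finK that by simp
  have m_neg: "m < 0"
    using m_le[OF neg(1)] neg(2) by simp
  have "m \<in> v ` K"
    unfolding m_def using finK neg(1) by (intro Min_in) auto
  then obtain i0 where i0: "i0 \<in> K" "v i0 = m"
    by auto
  text \<open>At a minimum of v the inequality v \<ge> G v is an equality, which forces the row of G to be
    stochastic and all its successors to be minima as well.\<close>
  have at_min: "(\<forall>z\<in>K. G j z > 0 \<longrightarrow> v z = m) \<and> (\<Sum>z\<in>K. G j z) = 1"
    if j: "j \<in> K" "v j = m" for j
  proof -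
    have split: "(\<Sum>z\<in>K. G j z * v z) = m * (\<Sum>z\<in>K. G j z) + (\<Sum>z\<in>K. G j z * (v z - m))"
      by (simp add: sum_distrib_left right_diff_distrib sum_subtractf mult.commute)
    have "(\<Sum>z\<in>K. G j z * (v z - m)) \<ge> 0"
      using G_nonneg j m_le by (intro sum_nonneg mult_nonneg_nonneg) auto
    moreover have "m * (\<Sum>z\<in>K. G j z) \<ge> m"
      using G_rows[OF j(1)] m_neg by (simp add: mult_le_cancel_left1)
    ultimately have excess: "(\<Sum>z\<in>K. G j z * (v z - m)) = 0" and row: "m * (\<Sum>z\<in>K. G j z) = m"
      using super[OF j(1)] j(2) split by linarith+
    have "\<forall>z\<in>K. G j z * (v z - m) = 0"
      using excess sum_nonneg_eq_0_iff[OF finK, of "\<lambda>z. G j z * (v z - m)"] G_nonneg j m_le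
      by (simp add: mult_nonneg_nonneg)
    then show ?thesis
      using row m_neg by auto
  qed
  have "v j = m" if "j \<in> K" for j
  proof -
    have "(i0, j) \<in> {(a, b). a \<in> K \<and> b \<in> K \<and> G a b > 0}\<^sup>*"
      using irr i0 that unfolding irreducible_on_def by blast
    then show ?thesis
      by (induction rule: rtrancl_induct) (use i0 at_min in auto)
  qed
  then show ?thesis
    using at_min i by blast
qed

lemma irreducible_substochastic_inverse_nonneg:
  fixes G M :: "'a \<Rightarrow> 'a \<Rightarrow> real"
  assumes finK: "finite K"
    and G_nonneg: "\<And>x y. x \<in> K \<Longrightarrow> y \<in> K \<Longrightarrow> G x y \<ge> 0"
    and G_rows: "\<And>x. x \<in> K \<Longrightarrow> (\<Sum>y\<in>K. G x y) \<le> 1"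
    and irr: "irreducible_on K G"
    and inv: "is_inverse_on K (\<lambda>a b. idm a b - G a b) M"
    and x: "x \<in> K" and y: "y \<in> K"
  shows "M x y \<ge> 0"
proof (rule ccontr)
  assume "\<not> M x y \<ge> 0"
  have "(\<Sum>z\<in>K. G i z * M z y) \<le> M i y" if i: "i \<in> K" for i
  proof -
    have "(\<Sum>z\<in>K. (idm i z - G i z) * M z y) = idm i y"
      using inv i y unfolding is_inverse_on_def by blast
    then show ?thesis
      using sum_idm_minus_mult[OF finK i, of G "\<lambda>z. M z y"] by (simp add: idm_def split: if_splits)
  qed
  then have rows: "(\<Sum>z\<in>K. G i z) = 1" if "i \<in> K" for i
    using irreducible_superharmonic_negative_imp_stochastic[OF finK G_nonneg G_rows irr, of "\<lambda>z. M z y" x]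
      x \<open>\<not> M x y \<ge> 0\<close> that by auto
  text \<open>Then the constant vector lies in the kernel of I - G.\<close>
  have "(\<Sum>u\<in>K. M x u * (\<Sum>z\<in>K. (idm u z - G u z) * 1)) = 1"
    by (rule is_inverse_on_apply[OF finK inv x])
  moreover have "(\<Sum>z\<in>K. (idm u z - G u z) * 1) = 0" if "u \<in> K" for u
    using sum_idm_minus_mult[OF finK that, of G "\<lambda>_. 1"] rows[OF that] by simp
  ultimately show False
    by simp
qed

lemma inverse_diag_ge_one:
  fixes G M :: "'a \<Rightarrow> 'a \<Rightarrow> real"
  assumes finK: "finite K"
    and G_nonneg: "\<And>x y. x \<in> K \<Longrightarrow> y \<in> K \<Longrightarrow> G x y \<ge> 0"
    and M_nonneg: "\<And>x y. x \<in> K \<Longrightarrow> y \<in> K \<Longrightarrow> M x y \<ge> 0"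
    and inv: "is_inverse_on K (\<lambda>a b. idm a b - G a b) M"
    and x: "x \<in> K"
  shows "M x x \<ge> 1"
proof -
  have "(\<Sum>z\<in>K. (idm x z - G x z) * M z x) = 1"
    using inv x unfolding is_inverse_on_def by (simp add: idm_def)
  moreover have "(\<Sum>z\<in>K. G x z * M z x) \<ge> 0"
    using G_nonneg M_nonneg x by (intro sum_nonneg mult_nonneg_nonneg) auto
  ultimately show ?thesis
    using sum_idm_minus_mult[OF finK x, of G "\<lambda>z. M z x"] by linarith
qed

section \<open>The fundamental matrix of a set with a drift function\<close>

fun restr_pow :: "('a \<Rightarrow> 'a \<Rightarrow> real) \<Rightarrow> 'a set \<Rightarrow> nat \<Rightarrow> 'a \<Rightarrow> 'a \<Rightarrow> real" where
  "restr_pow P H 0 = idm"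
| "restr_pow P H (Suc n) = (\<lambda>x y. \<Sum>z\<in>H. P x z * restr_pow P H n z y)"

definition fundamental_matrix :: "('a \<Rightarrow> 'a \<Rightarrow> real) \<Rightarrow> 'a set \<Rightarrow> 'a \<Rightarrow> 'a \<Rightarrow> real" where
  "fundamental_matrix P H x y = (\<Sum>n. restr_pow P H n x y)"

lemma restr_pow_nonneg:
  assumes "\<And>x y. P x y \<ge> 0"
  shows "restr_pow P H n x y \<ge> 0"
  using assms by (induction n arbitrary: x y) (auto simp: idm_def intro!: sum_nonneg)

lemma restr_pow_Suc_right:
  assumes "finite H" "x \<in> H" "y \<in> H"
  shows "restr_pow P H (Suc n) x y = (\<Sum>z\<in>H. restr_pow P H n x z * P z y)"
  using assms(2)
proof (induction n arbitrary: x)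
  case 0
  then show ?case using assms by (simp add: sum_idm_mult sum_mult_idm)
next
  case (Suc n)
  have "restr_pow P H (Suc (Suc n)) x y = (\<Sum>z\<in>H. P x z * restr_pow P H (Suc n) z y)"
    by simp
  also have "\<dots> = (\<Sum>z\<in>H. P x z * (\<Sum>w\<in>H. restr_pow P H n z w * P w y))"
    using Suc.IH by (intro sum.cong) auto
  also have "\<dots> = (\<Sum>w\<in>H. (\<Sum>z\<in>H. P x z * restr_pow P H n z w) * P w y)"
    by (rule sum_mult_sum_assoc)
  also have "\<dots> = (\<Sum>w\<in>H. restr_pow P H (Suc n) x w * P w y)"
    by simp
  finally show ?case .
qed

lemma sum_restr_pow_Suc:
  "(\<Sum>y\<in>H. restr_pow P H (Suc n) x y * v y) = (\<Sum>z\<in>H. P x z * (\<Sum>y\<in>H. restr_pow P H n z y * v y))"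
  unfolding sum_mult_sum_assoc by simp

lemma taboo_Suc_eq_restr_pow:
  assumes "finite H"
  shows "taboo P H (Suc n) x y = (\<Sum>z\<in>H. P x z * (\<Sum>w\<in>H. restr_pow P H n z w * P w y))"
proof (induction n arbitrary: x)
  case 0
  then show ?case
    using assms by (auto simp: sum_idm_mult intro!: sum.cong)
next
  case (Suc n)
  have "taboo P H (Suc (Suc n)) x y
      = (\<Sum>z\<in>H. P x z * (\<Sum>z'\<in>H. P z z' * (\<Sum>w\<in>H. restr_pow P H n z' w * P w y)))"
    using assms Suc by simp
  also have "\<dots> = (\<Sum>z\<in>H. P x z * (\<Sum>w\<in>H. restr_pow P H (Suc n) z w * P w y))"
    by (simp add: sum_mult_sum_assoc)
  finally show ?case .
qed

text \<open>A Lyapunov function decreasing by at least one per step inside the finite set H bounds the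
  expected time spent in H; hence the series of the powers of P restricted to H converges.\<close>

locale foster_drift =
  fixes P :: "'a \<Rightarrow> 'a \<Rightarrow> real" and H :: "'a set" and g :: "'a \<Rightarrow> real"
  assumes finite_H: "finite H"
    and P_nonneg: "\<And>x y. P x y \<ge> 0"
    and g_nonneg: "\<And>x. x \<in> H \<Longrightarrow> g x \<ge> 0"
    and drift: "\<And>x. x \<in> H \<Longrightarrow> (\<Sum>y\<in>H. P x y * g y) \<le> g x - 1"
begin

lemma restr_pow_drift_bound:
  assumes "x \<in> H"
  shows "(\<Sum>n<N. \<Sum>y\<in>H. restr_pow P H n x y) + (\<Sum>y\<in>H. restr_pow P H N x y * g y) \<le> g x"
  using assms
proof (induction N arbitrary: x)
  case 0
  then show ?case using finite_H by (simp add: sum_idm_mult)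
next
  case (Suc N)
  have step: "(\<Sum>y\<in>H. restr_pow P H (Suc n) x y) = (\<Sum>z\<in>H. P x z * (\<Sum>y\<in>H. restr_pow P H n z y))" for n
    using sum_restr_pow_Suc[where v="\<lambda>_. 1" and n=n and x=x] by simp
  have visits: "(\<Sum>n<Suc N. \<Sum>y\<in>H. restr_pow P H n x y)
      = 1 + (\<Sum>z\<in>H. P x z * (\<Sum>n<N. \<Sum>y\<in>H. restr_pow P H n z y))"
    unfolding sum.lessThan_Suc_shift step sum_distrib_left
    using finite_H Suc.prems sum_idm_mult[of H x "\<lambda>_. 1"] by (simp add: sum.swap[of _ "{..<N}"])
  have "(\<Sum>n<Suc N. \<Sum>y\<in>H. restr_pow P H n x y) + (\<Sum>y\<in>H. restr_pow P H (Suc N) x y * g y)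
      = 1 + (\<Sum>z\<in>H. P x z * ((\<Sum>n<N. \<Sum>y\<in>H. restr_pow P H n z y) + (\<Sum>y\<in>H. restr_pow P H N z y * g y)))"
    unfolding visits sum_restr_pow_Suc by (simp add: distrib_left sum.distrib)
  also have "\<dots> \<le> 1 + (\<Sum>z\<in>H. P x z * g z)"
    using Suc.IH P_nonneg by (auto intro!: sum_mono mult_left_mono)
  also have "\<dots> \<le> g x"
    using drift[OF Suc.prems] by simp
  finally show ?case .
qed

lemma summable_restr_pow:
  assumes "x \<in> H" "y \<in> H"
  shows "summable (\<lambda>n. restr_pow P H n x y)"
proof (rule summableI_nonneg_bounded)
  show "0 \<le> restr_pow P H n x y" for n
    by (rule restr_pow_nonneg) (rule P_nonneg)
  fix N
  have "(\<Sum>n<N. restr_pow P H n x y) \<le> (\<Sum>n<N. \<Sum>y\<in>H. restr_pow P H n x y)"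
    using assms finite_H restr_pow_nonneg[OF P_nonneg] by (intro sum_mono member_le_sum) auto
  also have "\<dots> \<le> g x"
  proof -
    have "0 \<le> (\<Sum>y\<in>H. restr_pow P H N x y * g y)"
      using g_nonneg restr_pow_nonneg[OF P_nonneg] by (intro sum_nonneg mult_nonneg_nonneg) auto
    then show ?thesis using restr_pow_drift_bound[OF assms(1), of N] by linarith
  qed
  finally show "(\<Sum>n<N. restr_pow P H n x y) \<le> g x" .
qed

lemma fundamental_matrix_nonneg:
  "x \<in> H \<Longrightarrow> y \<in> H \<Longrightarrow> fundamental_matrix P H x y \<ge> 0"
  unfolding fundamental_matrix_def
  by (intro suminf_nonneg summable_restr_pow restr_pow_nonneg P_nonneg)

lemma fundamental_matrix_eq_left:
  assumes "x \<in> H" "y \<in> H"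
  shows "fundamental_matrix P H x y = idm x y + (\<Sum>z\<in>H. P x z * fundamental_matrix P H z y)"
proof -
  have "(\<Sum>n. restr_pow P H (Suc n) x y) = (\<Sum>n. \<Sum>z\<in>H. P x z * restr_pow P H n z y)"
    by simp
  also have "\<dots> = (\<Sum>z\<in>H. P x z * fundamental_matrix P H z y)"
    unfolding fundamental_matrix_def using summable_restr_pow assms
    by (subst suminf_sum) (auto intro: summable_mult simp: suminf_mult)
  finally show ?thesis
    unfolding fundamental_matrix_def
    using suminf_split_head[OF summable_restr_pow[OF assms]] by simp
qed

lemma fundamental_matrix_eq_right:
  assumes "x \<in> H" "y \<in> H"
  shows "fundamental_matrix P H x y = idm x y + (\<Sum>z\<in>H. fundamental_matrix P H x z * P z y)"
proof -
  have "(\<Sum>n. restr_pow P H (Suc n) x y) = (\<Sum>n. \<Sum>z\<in>H. restr_pow P H n x z * P z y)"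
    using restr_pow_Suc_right[OF finite_H assms] by simp
  also have "\<dots> = (\<Sum>z\<in>H. fundamental_matrix P H x z * P z y)"
    unfolding fundamental_matrix_def using summable_restr_pow assms
    by (subst suminf_sum) (auto intro: summable_mult2 simp: suminf_mult2)
  finally show ?thesis
    unfolding fundamental_matrix_def
    using suminf_split_head[OF summable_restr_pow[OF assms]] by simp
qed

lemma fundamental_matrix_is_inverse:
  "is_inverse_on H (\<lambda>a b. idm a b - P a b) (fundamental_matrix P H)"
  unfolding is_inverse_on_def
proof (intro conjI ballI)
  fix x y assume xy: "x \<in> H" "y \<in> H"
  show "(\<Sum>z\<in>H. (idm x z - P x z) * fundamental_matrix P H z y) = idm x y"
    using sum_idm_minus_mult[OF finite_H xy(1), where M=P and v="\<lambda>z. fundamental_matrix P H z y"]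
      fundamental_matrix_eq_left[OF xy] by linarith
  show "(\<Sum>z\<in>H. fundamental_matrix P H x z * (idm z y - P z y)) = idm x y"
    using sum_mult_idm_minus[OF finite_H xy(2), where M=P and v="fundamental_matrix P H x"]
      fundamental_matrix_eq_right[OF xy] by linarith
qed

lemma inv_on_eq_fundamental_matrix:
  "x \<in> H \<Longrightarrow> y \<in> H \<Longrightarrow> inv_on H (\<lambda>a b. idm a b - P a b) x y = fundamental_matrix P H x y"
  by (rule inv_on_eqI[OF finite_H fundamental_matrix_is_inverse])

lemma fundamental_matrix_apply_eq:
  assumes "x \<in> H"
  shows "(\<Sum>u\<in>H. fundamental_matrix P H x u * b u)
    = b x + (\<Sum>z\<in>H. P x z * (\<Sum>u\<in>H. fundamental_matrix P H z u * b u))"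
proof -
  have "(\<Sum>u\<in>H. fundamental_matrix P H x u * b u)
      = (\<Sum>u\<in>H. (idm x u + (\<Sum>z\<in>H. P x z * fundamental_matrix P H z u)) * b u)"
    using fundamental_matrix_eq_left[OF assms] by (intro sum.cong) auto
  also have "\<dots> = b x + (\<Sum>u\<in>H. (\<Sum>z\<in>H. P x z * fundamental_matrix P H z u) * b u)"
    using finite_H assms by (simp add: distrib_right sum.distrib sum_idm_mult)
  finally show ?thesis
    by (simp only: sum_mult_sum_assoc)
qed

lemma fundamental_matrix_apply_le:
  assumes "y \<in> H" and "\<And>u. u \<in> H \<Longrightarrow> b u + (\<Sum>z\<in>H. P u z * w z) \<le> w u"
  shows "(\<Sum>u\<in>H. fundamental_matrix P H y u * b u) \<le> w y"
proof -
  have "(\<Sum>u\<in>H. fundamental_matrix P H y u * b u)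
      \<le> (\<Sum>u\<in>H. fundamental_matrix P H y u * (\<Sum>z\<in>H. (idm u z - P u z) * w z))"
  proof (intro sum_mono mult_left_mono)
    fix u assume u: "u \<in> H"
    show "b u \<le> (\<Sum>z\<in>H. (idm u z - P u z) * w z)"
      using sum_idm_minus_mult[OF finite_H u, of P w] assms(2)[OF u] by linarith
    show "fundamental_matrix P H y u \<ge> 0"
      using fundamental_matrix_nonneg assms(1) u .
  qed
  also have "\<dots> = w y"
    by (rule is_inverse_on_apply[OF finite_H fundamental_matrix_is_inverse assms(1)])
  finally show ?thesis .
qed

end

section \<open>A comparison theorem for stationary distributions\<close>

lemma stochastic_nonneg: "stochastic P \<Longrightarrow> P x y \<ge> 0"
  unfolding stochastic_def by blast

lemma stochastic_sum_le_1:
  assumes "stochastic P" "finite F"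
  shows "(\<Sum>y\<in>F. P x y) \<le> 1"
  using assms finite_sum_le_has_sum[where f="P x" and S=1 and A=UNIV and B=F] stochastic_nonneg[OF assms(1)]
  unfolding stochastic_def by auto

lemma stochastic_bounded_summable:
  assumes "stochastic P" "0 \<le> m" "\<And>y. y \<in> C \<Longrightarrow> 0 \<le> v y \<and> v y \<le> m"
  shows "(\<lambda>y. P x y * v y) summable_on C" and "infsum (\<lambda>y. P x y * v y) C \<le> m"
proof -
  have "P x summable_on UNIV"
    using assms(1) unfolding stochastic_def summable_on_def by blast
  then have "(\<lambda>y. P x y * m) summable_on C"
    by (intro summable_on_cmult_left) (rule summable_on_subset_banach, auto)
  then show summable: "(\<lambda>y. P x y * v y) summable_on C"
    by (rule summable_on_comparison_test) (use assms stochastic_nonneg[OF assms(1)] in \<open>auto intro: mult_left_mono\<close>)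
  show "infsum (\<lambda>y. P x y * v y) C \<le> m"
  proof (rule infsum_le_finite_sums[OF summable])
    fix F assume F: "finite F" "F \<subseteq> C"
    have "(\<Sum>y\<in>F. P x y * v y) \<le> (\<Sum>y\<in>F. P x y) * m"
      unfolding sum_distrib_right using assms F stochastic_nonneg[OF assms(1)]
      by (intro sum_mono mult_left_mono) auto
    also have "\<dots> \<le> m"
      using mult_right_mono[OF stochastic_sum_le_1[OF assms(1) F(1)] assms(2)] by simp
    finally show "(\<Sum>y\<in>F. P x y * v y) \<le> m" .
  qed
qed

lemma stationary_dist_nonneg: "stationary_dist P \<pi> \<Longrightarrow> \<pi> x \<ge> 0"
  unfolding stationary_dist_def by blast

lemma stationary_dist_summable_on: "stationary_dist P \<pi> \<Longrightarrow> \<pi> summable_on C"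
  unfolding stationary_dist_def summable_on_def
  by (blast intro: summable_on_subset_banach[of \<pi> UNIV C, unfolded summable_on_def])

lemma stationary_dist_sum_le:
  assumes "stationary_dist P \<pi>" "\<And>x y. P x y \<ge> 0" "finite F"
  shows "(\<Sum>x\<in>F. \<pi> x * P x y) \<le> \<pi> y"
  using assms finite_sum_le_has_sum[where f="\<lambda>x. \<pi> x * P x y" and S="\<pi> y" and A=UNIV and B=F]
  unfolding stationary_dist_def by auto

lemma has_sum_finite_sum:
  fixes f :: "'i \<Rightarrow> 'a \<Rightarrow> real"
  assumes "finite I" "\<And>i. i \<in> I \<Longrightarrow> (f i has_sum s i) A"
  shows "((\<lambda>x. \<Sum>i\<in>I. f i x) has_sum (\<Sum>i\<in>I. s i)) A"
  using assms by (induction I rule: finite_induct) (auto intro!: has_sum_add)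

lemma stationary_dist_bounded_summable:
  assumes "stationary_dist P \<pi>" "\<And>x. x \<in> B \<Longrightarrow> 0 \<le> w x \<and> w x \<le> m"
  shows "(\<lambda>x. \<pi> x * w x) summable_on B"
proof (rule summable_on_comparison_test)
  show "(\<lambda>x. \<pi> x * m) summable_on B"
    by (intro summable_on_cmult_left stationary_dist_summable_on[OF assms(1)])
qed (use assms stationary_dist_nonneg[OF assms(1)] in \<open>auto intro: mult_left_mono\<close>)

lemma stationary_infsum_le_infsum_P:
  assumes stoch: "stochastic P" and stat: "stationary_dist P \<pi>"
    and m: "0 \<le> m" and v_bounds: "\<And>x. x \<in> C \<Longrightarrow> 0 \<le> v x \<and> v x \<le> m"
  shows "infsum (\<lambda>y. \<pi> y * v y) C \<le> infsum (\<lambda>x. \<pi> x * infsum (\<lambda>y. P x y * v y) C) UNIV"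
proof (rule infsum_le_finite_sums)
  show "(\<lambda>y. \<pi> y * v y) summable_on C"
    using stat v_bounds by (rule stationary_dist_bounded_summable)
  fix F assume F: "finite F" "F \<subseteq> C"
  have "((\<lambda>x. \<Sum>y\<in>F. \<pi> x * P x y * v y) has_sum (\<Sum>y\<in>F. \<pi> y * v y)) UNIV"
    using stat unfolding stationary_dist_def by (intro has_sum_finite_sum F has_sum_cmult_left) auto
  moreover have "((\<lambda>x. \<pi> x * infsum (\<lambda>y. P x y * v y) C)
      has_sum infsum (\<lambda>x. \<pi> x * infsum (\<lambda>y. P x y * v y) C) UNIV) UNIV"
    using stochastic_bounded_summable(2)[OF stoch m v_bounds] stochastic_nonneg[OF stoch] v_bounds
    by (intro has_sum_infsum stationary_dist_bounded_summable[OF stat, where m=m])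
      (auto intro!: infsum_nonneg mult_nonneg_nonneg)
  moreover have "(\<Sum>y\<in>F. \<pi> x * P x y * v y) \<le> \<pi> x * infsum (\<lambda>y. P x y * v y) C" for x
  proof -
    have "(\<Sum>y\<in>F. P x y * v y) \<le> infsum (\<lambda>y. P x y * v y) C"
      using F stochastic_bounded_summable(1)[OF stoch m v_bounds] v_bounds stochastic_nonneg[OF stoch]
      by (intro finite_sum_le_infsum) auto
    then have "\<pi> x * (\<Sum>y\<in>F. P x y * v y) \<le> \<pi> x * infsum (\<lambda>y. P x y * v y) C"
      by (rule mult_left_mono) (rule stationary_dist_nonneg[OF stat])
    then show ?thesis
      by (simp add: sum_distrib_left mult.assoc)
  qed
  ultimately show "(\<Sum>y\<in>F. \<pi> y * v y) \<le> infsum (\<lambda>x. \<pi> x * infsum (\<lambda>y. P x y * v y) C) UNIV"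
    by (rule has_sum_mono)
qed

lemma stationary_bounded_drift_bound:
  fixes P :: "'a \<Rightarrow> 'a \<Rightarrow> real" and \<pi> f v :: "'a \<Rightarrow> real"
  assumes stoch: "stochastic P" and stat: "stationary_dist P \<pi>" and fin: "finite (-C)"
    and f_nonneg: "\<And>x. x \<in> C \<Longrightarrow> f x \<ge> 0"
    and m: "0 \<le> m" and v_bounds: "\<And>x. x \<in> C \<Longrightarrow> 0 \<le> v x \<and> v x \<le> m"
    and drift: "\<And>x. x \<in> C \<Longrightarrow> f x + infsum (\<lambda>y. P x y * v y) C \<le> v x"
  shows "(\<lambda>y. \<pi> y * f y) summable_on C"
    and "infsum (\<lambda>y. \<pi> y * f y) C \<le> (\<Sum>x\<in>-C. \<pi> x * infsum (\<lambda>y. P x y * v y) C)"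
proof -
  define Qv where "Qv x = infsum (\<lambda>y. P x y * v y) C" for x
  have Qv: "0 \<le> Qv x \<and> Qv x \<le> m" for x
    unfolding Qv_def using stochastic_bounded_summable(2)[OF stoch m v_bounds] v_bounds
      stochastic_nonneg[OF stoch] by (auto intro!: infsum_nonneg mult_nonneg_nonneg)
  have \<pi>v_summable: "(\<lambda>y. \<pi> y * v y) summable_on C"
    using stat v_bounds by (rule stationary_dist_bounded_summable)
  have \<pi>Qv_summable: "(\<lambda>x. \<pi> x * Qv x) summable_on B" for B
    using stat Qv by (rule stationary_dist_bounded_summable)
  have f_bounds: "0 \<le> f x \<and> f x \<le> m" if "x \<in> C" for x
    using drift[OF that] Qv[of x] v_bounds[OF that] f_nonneg[OF that] unfolding Qv_def by linarith
  show \<pi>f_summable: "(\<lambda>y. \<pi> y * f y) summable_on C"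
    using stat f_bounds by (rule stationary_dist_bounded_summable)
  have "infsum (\<lambda>y. \<pi> y * f y) C + infsum (\<lambda>x. \<pi> x * Qv x) C \<le> infsum (\<lambda>y. \<pi> y * v y) C"
  proof -
    have "infsum (\<lambda>y. \<pi> y * f y + \<pi> y * Qv y) C \<le> infsum (\<lambda>y. \<pi> y * v y) C"
      using drift stationary_dist_nonneg[OF stat] unfolding Qv_def[symmetric]
      by (intro infsum_mono summable_on_add \<pi>f_summable \<pi>Qv_summable \<pi>v_summable)
        (auto simp flip: distrib_left intro: mult_left_mono)
    then show ?thesis
      by (simp add: infsum_add[OF \<pi>f_summable \<pi>Qv_summable])
  qed
  moreover have "infsum (\<lambda>y. \<pi> y * v y) C \<le> infsum (\<lambda>x. \<pi> x * Qv x) UNIV"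
    unfolding Qv_def by (rule stationary_infsum_le_infsum_P[OF stoch stat m v_bounds])
  moreover have "infsum (\<lambda>x. \<pi> x * Qv x) UNIV
      = (\<Sum>x\<in>-C. \<pi> x * Qv x) + infsum (\<lambda>x. \<pi> x * Qv x) C"
    using infsum_Un_disjoint[OF \<pi>Qv_summable \<pi>Qv_summable, of "-C" C] fin by simp
  ultimately show "infsum (\<lambda>y. \<pi> y * f y) C \<le> (\<Sum>x\<in>-C. \<pi> x * Qv x)"
    by linarith
qed

text \<open>Truncating u at the level m = \<Sum>y\<in>F. u y reduces the bound on the finite partial sums over F
  to the bounded case.\<close>

theorem stationary_drift_bound:
  fixes P :: "'a \<Rightarrow> 'a \<Rightarrow> real" and \<pi> f u :: "'a \<Rightarrow> real"
  assumes stoch: "stochastic P" and stat: "stationary_dist P \<pi>" and fin: "finite (-C)"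
    and f_nonneg: "\<And>x. x \<in> C \<Longrightarrow> f x \<ge> 0" and u_nonneg: "\<And>x. x \<in> C \<Longrightarrow> u x \<ge> 0"
    and u_summable: "\<And>x. (\<lambda>y. P x y * u y) summable_on C"
    and drift: "\<And>x. x \<in> C \<Longrightarrow> infsum (\<lambda>y. P x y * u y) C \<le> u x - f x"
  shows "(\<lambda>y. \<pi> y * f y) summable_on C"
    and "infsum (\<lambda>y. \<pi> y * f y) C \<le> (\<Sum>x\<in>-C. \<pi> x * infsum (\<lambda>y. P x y * u y) C)"
proof -
  define B where "B = (\<Sum>x\<in>-C. \<pi> x * infsum (\<lambda>y. P x y * u y) C)"
  note \<pi>_nonneg = stationary_dist_nonneg[OF stat]
  have finite_bound: "(\<Sum>y\<in>F. \<pi> y * f y) \<le> B" if F: "finite F" "F \<subseteq> C" for F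
  proof -
    define m where "m = (\<Sum>y\<in>F. u y)"
    define v where "v y = min (u y) m" for y
    define f' where "f' y = (if u y \<le> m then f y else 0)" for y
    have m: "0 \<le> m" and u_le_m: "\<And>y. y \<in> F \<Longrightarrow> u y \<le> m"
      unfolding m_def using F u_nonneg by (auto intro: sum_nonneg member_le_sum)
    have v_bounds: "0 \<le> v y \<and> v y \<le> m" if "y \<in> C" for y
      unfolding v_def using u_nonneg[OF that] m by simp
    have Qv_le_Qu: "infsum (\<lambda>y. P x y * v y) C \<le> infsum (\<lambda>y. P x y * u y) C" for x
      using stochastic_bounded_summable(1)[OF stoch m v_bounds] u_summable stochastic_nonneg[OF stoch]
      by (intro infsum_mono) (auto simp: v_def intro: mult_left_mono)
    have Qv_le_m: "infsum (\<lambda>y. P x y * v y) C \<le> m" for x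
      by (rule stochastic_bounded_summable(2)[OF stoch m v_bounds])
    have "f' x + infsum (\<lambda>y. P x y * v y) C \<le> v x" if x: "x \<in> C" for x
      using Qv_le_Qu[of x] Qv_le_m[of x] drift[OF x] unfolding f'_def v_def by auto
    then have bounded: "(\<lambda>y. \<pi> y * f' y) summable_on C"
        "infsum (\<lambda>y. \<pi> y * f' y) C \<le> (\<Sum>x\<in>-C. \<pi> x * infsum (\<lambda>y. P x y * v y) C)"
      using stationary_bounded_drift_bound[OF stoch stat fin _ m v_bounds] f_nonneg
      by (auto simp: f'_def)
    have "(\<Sum>y\<in>F. \<pi> y * f y) = (\<Sum>y\<in>F. \<pi> y * f' y)"
      using u_le_m by (simp add: f'_def)
    also have "\<dots> \<le> infsum (\<lambda>y. \<pi> y * f' y) C"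
      using F bounded(1) f_nonneg \<pi>_nonneg by (intro finite_sum_le_infsum) (auto simp: f'_def)
    also have "\<dots> \<le> (\<Sum>x\<in>-C. \<pi> x * infsum (\<lambda>y. P x y * v y) C)"
      by (rule bounded(2))
    also have "\<dots> \<le> B"
      unfolding B_def using Qv_le_Qu \<pi>_nonneg by (intro sum_mono mult_left_mono) auto
    finally show ?thesis .
  qed
  show summable: "(\<lambda>y. \<pi> y * f y) summable_on C"
    using f_nonneg \<pi>_nonneg finite_bound
    by (intro nonneg_bdd_above_summable_on bdd_aboveI) auto
  show "infsum (\<lambda>y. \<pi> y * f y) C \<le> B"
    using summable finite_bound by (rule infsum_le_finite_sums)
qed

section \<open>The chain watched on K before leaving A\<close>

locale block_chain =
  fixes P :: "'a \<Rightarrow> 'a \<Rightarrow> real" and K A :: "'a set" and g :: "'a \<Rightarrow> real"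
  assumes stoch: "stochastic P" and finite_A: "finite A" and K_sub_A: "K \<subseteq> A"
    and g_nonneg: "\<forall>x\<in>-K. g x \<ge> 0"
    and g_drift: "\<forall>x\<in>-K. (\<lambda>y. P x y * g y) summable_on (-K) \<and>
                         infsum (\<lambda>y. P x y * g y) (-K) \<le> g x - 1"
begin

lemma P_nonneg: "P x y \<ge> 0"
  using stoch by (rule stochastic_nonneg)

lemma finite_K: "finite K"
  using finite_A K_sub_A by (rule finite_subset[rotated])

lemma finite_A': "finite (A - K)"
  using finite_A by simp

lemma infsum_split_exit:
  assumes "(\<lambda>y. P x y * v y) summable_on (-K)"
  shows "(\<lambda>y. P x y * v y) summable_on (-A)"
    and "infsum (\<lambda>y. P x y * v y) (-K) = (\<Sum>y\<in>A - K. P x y * v y) + infsum (\<lambda>y. P x y * v y) (-A)"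
proof -
  show summable: "(\<lambda>y. P x y * v y) summable_on (-A)"
    by (rule summable_on_subset_banach[OF assms]) (use K_sub_A in auto)
  have "-K = (A - K) \<union> -A"
    using K_sub_A by auto
  then show "infsum (\<lambda>y. P x y * v y) (-K) = (\<Sum>y\<in>A - K. P x y * v y) + infsum (\<lambda>y. P x y * v y) (-A)"
    using infsum_Un_disjoint[of _ "A - K" "-A"] finite_A' summable by auto
qed

lemma g_drift_A':
  assumes "x \<in> A - K"
  shows "(\<Sum>y\<in>A - K. P x y * g y) \<le> g x - 1"
proof -
  have "infsum (\<lambda>y. P x y * g y) (-A) \<ge> 0"
    using g_nonneg P_nonneg K_sub_A by (intro infsum_nonneg mult_nonneg_nonneg) auto
  moreover have "x \<in> -K"
    using assms by blast
  ultimately show ?thesis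
    using g_drift infsum_split_exit(2)[of x g] by force
qed

sublocale foster_drift P "A - K" g
  by unfold_locales (use finite_A' P_nonneg g_nonneg g_drift_A' in auto)

abbreviation "N \<equiv> fundamental_matrix P (A - K)"

lemma p12N_eq: "p12N P K A v x = (\<Sum>z\<in>A - K. P x z * (\<Sum>u\<in>A - K. N z u * v u))"
  unfolding p12N_def using inv_on_eq_fundamental_matrix by (intro sum.cong refl) auto

lemma p12N_nonneg: "(\<And>u. u \<in> A - K \<Longrightarrow> v u \<ge> 0) \<Longrightarrow> p12N P K A v x \<ge> 0"
  unfolding p12N_eq using P_nonneg fundamental_matrix_nonneg
  by (intro sum_nonneg mult_nonneg_nonneg) auto

lemma p12N_mono: "(\<And>u. u \<in> A - K \<Longrightarrow> v u \<le> w u) \<Longrightarrow> p12N P K A v x \<le> p12N P K A w x"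
  unfolding p12N_eq using P_nonneg fundamental_matrix_nonneg
  by (intro sum_mono mult_left_mono) auto

lemma p12N_add: "p12N P K A (\<lambda>u. v u + w u) x = p12N P K A v x + p12N P K A w x"
  unfolding p12N_eq by (simp add: distrib_left sum.distrib)

lemma exit_G_eq: "exit_G P K A x y = P x y + (\<Sum>z\<in>A - K. P x z * (\<Sum>w\<in>A - K. N z w * P w y))"
proof -
  have "(\<lambda>n. taboo P (A - K) (Suc n) x y) sums (\<Sum>z\<in>A - K. P x z * (\<Sum>w\<in>A - K. N z w * P w y))"
    unfolding taboo_Suc_eq_restr_pow[OF finite_A'] fundamental_matrix_def
    by (intro sums_sum sums_mult sums_mult2 summable_sums summable_restr_pow) auto
  from sums_Suc[OF this] show ?thesis
    unfolding exit_G_def by (simp add: sums_iff add.commute)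
qed

lemma exit_G_nonneg: "exit_G P K A x y \<ge> 0"
  unfolding exit_G_eq using P_nonneg fundamental_matrix_nonneg
  by (intro add_nonneg_nonneg sum_nonneg mult_nonneg_nonneg) auto

lemma exit_G_row_sum_le_1: "(\<Sum>y\<in>K. exit_G P K A x y) \<le> 1"
proof -
  define p where "p w = (\<Sum>y\<in>K. P w y)" for w
  have P_split: "p w + (\<Sum>u\<in>A - K. P w u * 1) \<le> 1" for w
    unfolding p_def using stochastic_sum_le_1[OF stoch finite_A, of w]
    by (simp add: sum.subset_diff[OF K_sub_A finite_A])
  have "(\<Sum>y\<in>K. exit_G P K A x y) = p x + (\<Sum>z\<in>A - K. P x z * (\<Sum>w\<in>A - K. N z w * p w))"
    unfolding exit_G_eq p_def sum.distrib sum_distrib_left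
    by (simp add: sum.swap[of _ K] mult.assoc)
  also have "\<dots> \<le> p x + (\<Sum>z\<in>A - K. P x z * 1)"
    using fundamental_matrix_apply_le[of _ p "\<lambda>_. 1"] P_split P_nonneg
    by (intro add_left_mono sum_mono mult_left_mono) auto
  also have "\<dots> \<le> 1"
    by (rule P_split)
  finally show ?thesis .
qed

lemma exit_G_le_P2:
  assumes "x \<in> K" "y \<in> K"
  shows "exit_G P K A x y \<le> P2 P K A x y"
proof -
  define d where "d = (\<Sum>y'\<in>K. exit_G P K A x y')"
  have "exit_G P K A x y \<le> d"
    unfolding d_def using finite_K assms exit_G_nonneg by (intro member_le_sum) auto
  moreover have "exit_G P K A x y * d \<le> exit_G P K A x y"
    using exit_G_row_sum_le_1 exit_G_nonneg unfolding d_def by (simp add: mult_left_le)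
  ultimately show ?thesis
    unfolding P2_def d_def[symmetric] using exit_G_nonneg[of x y]
    by (cases "d = 0") (auto simp: le_divide_eq)
qed

lemma stationary_entrance_le:
  assumes stat: "stationary_dist P \<pi>" and u: "u \<in> A - K"
  shows "(\<Sum>x\<in>K. \<pi> x * (\<Sum>z\<in>A - K. P x z * N z u)) \<le> \<pi> u"
proof -
  have inflow: "(\<Sum>x\<in>K. \<pi> x * P x z) \<le> (\<Sum>w\<in>A - K. \<pi> w * (idm w z - P w z))"
    if z: "z \<in> A - K" for z
  proof -
    have "(\<Sum>x\<in>K. \<pi> x * P x z) + (\<Sum>w\<in>A - K. \<pi> w * P w z) \<le> \<pi> z"
      using stationary_dist_sum_le[OF stat P_nonneg finite_A, of z]
      by (simp add: sum.subset_diff[OF K_sub_A finite_A])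
    then show ?thesis
      using sum_mult_idm_minus[OF finite_A' z, of \<pi> P] by linarith
  qed
  have "(\<Sum>x\<in>K. \<pi> x * (\<Sum>z\<in>A - K. P x z * N z u)) = (\<Sum>z\<in>A - K. (\<Sum>x\<in>K. \<pi> x * P x z) * N z u)"
    by (rule sum_mult_sum_assoc)
  also have "\<dots> \<le> (\<Sum>z\<in>A - K. (\<Sum>w\<in>A - K. \<pi> w * (idm w z - P w z)) * N z u)"
    using inflow fundamental_matrix_nonneg u by (intro sum_mono mult_right_mono) auto
  also have "\<dots> = \<pi> u"
    by (rule is_inverse_on_row_apply[OF finite_A' fundamental_matrix_is_inverse u])
  finally show ?thesis .
qed

lemma kappa_low_le_stationary:
  assumes stat: "stationary_dist P \<pi>" and f_nonneg: "\<And>x. f x \<ge> 0"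
    and summable: "(\<lambda>y. \<pi> y * f y) summable_on UNIV"
  shows "(\<Sum>x\<in>K. \<pi> x * kappa_low P K A f x) \<le> infsum (\<lambda>y. \<pi> y * f y) UNIV"
proof -
  have "(\<Sum>x\<in>K. \<pi> x * p12N P K A f x)
      = (\<Sum>u\<in>A - K. (\<Sum>x\<in>K. \<pi> x * (\<Sum>z\<in>A - K. P x z * N z u)) * f u)"
    unfolding p12N_eq sum_mult_sum_assoc ..
  also have "\<dots> \<le> (\<Sum>u\<in>A - K. \<pi> u * f u)"
    using stationary_entrance_le[OF stat] f_nonneg by (intro sum_mono mult_right_mono) auto
  finally have "(\<Sum>x\<in>K. \<pi> x * kappa_low P K A f x) \<le> (\<Sum>x\<in>K. \<pi> x * f x) + (\<Sum>u\<in>A - K. \<pi> u * f u)"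
    unfolding kappa_low_def by (simp add: distrib_left sum.distrib)
  also have "\<dots> = (\<Sum>x\<in>A. \<pi> x * f x)"
    by (simp add: sum.subset_diff[OF K_sub_A finite_A])
  also have "\<dots> \<le> infsum (\<lambda>y. \<pi> y * f y) UNIV"
    using finite_A summable stationary_dist_nonneg[OF stat] f_nonneg by (intro finite_sum_le_infsum) auto
  finally show ?thesis .
qed

lemma stationary_exit_G_superharmonic:
  assumes stat: "stationary_dist P \<pi>"
  shows "(\<Sum>x\<in>K. \<pi> x * exit_G P K A x y) \<le> \<pi> y"
proof -
  have "(\<Sum>x\<in>K. \<pi> x * (\<Sum>z\<in>A - K. P x z * (\<Sum>w\<in>A - K. N z w * P w y)))
      = (\<Sum>w\<in>A - K. (\<Sum>x\<in>K. \<pi> x * (\<Sum>z\<in>A - K. P x z * N z w)) * P w y)"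
    unfolding sum_mult_sum_assoc ..
  also have "\<dots> \<le> (\<Sum>w\<in>A - K. \<pi> w * P w y)"
    using stationary_entrance_le[OF stat] P_nonneg by (intro sum_mono mult_right_mono) auto
  finally have "(\<Sum>x\<in>K. \<pi> x * exit_G P K A x y) \<le> (\<Sum>x\<in>K. \<pi> x * P x y) + (\<Sum>w\<in>A - K. \<pi> w * P w y)"
    unfolding exit_G_eq by (simp add: distrib_left sum.distrib)
  also have "\<dots> = (\<Sum>x\<in>A. \<pi> x * P x y)"
    by (simp add: sum.subset_diff[OF K_sub_A finite_A])
  also have "\<dots> \<le> \<pi> y"
    by (rule stationary_dist_sum_le[OF stat P_nonneg finite_A])
  finally show ?thesis .
qed

text \<open>On A' the drift function u may be replaced by N (f + e), the smallest solution of the drift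
  inequality there, where e is the expected value of u on the first step out of A. This keeps the
  drift inequality and makes P u on K computable in terms of p12N.\<close>

lemma drift_function_on_A':
  fixes f u h :: "'a \<Rightarrow> real"
  assumes f_nonneg: "\<And>x. f x \<ge> 0" and u_nonneg: "\<And>x. x \<in> -K \<Longrightarrow> u x \<ge> 0"
    and u_drift: "\<forall>x\<in>-K. (\<lambda>y. P x y * u y) summable_on (-K) \<and>
                         infsum (\<lambda>y. P x y * u y) (-K) \<le> u x - f x"
    and u_exit: "\<forall>x\<in>A. (\<lambda>y. P x y * u y) summable_on (-A) \<and> infsum (\<lambda>y. P x y * u y) (-A) \<le> h x"
  obtains u' where "\<And>x. x \<in> -K \<Longrightarrow> u' x \<ge> 0"
    and "\<And>x. (\<lambda>y. P x y * u' y) summable_on (-K)"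
    and "\<And>x. x \<in> -K \<Longrightarrow> infsum (\<lambda>y. P x y * u' y) (-K) \<le> u' x - f x"
    and "\<And>x. x \<in> K \<Longrightarrow> infsum (\<lambda>y. P x y * u' y) (-K) \<le> p12N P K A f x + h x + p12N P K A h x"
proof -
  define e where "e x = infsum (\<lambda>y. P x y * u y) (-A)" for x
  define u' where "u' y = (if y \<in> A - K then \<Sum>v\<in>A - K. N y v * (f v + e v) else u y)" for y
  have u_exit_summable: "(\<lambda>y. P x y * u y) summable_on (-A)" for x
  proof (cases "x \<in> A")
    case False
    then show ?thesis
      using u_drift K_sub_A infsum_split_exit(1)[of x u] by blast
  qed (use u_exit in blast)
  have e_nonneg: "e x \<ge> 0" for x
    unfolding e_def using P_nonneg u_nonneg K_sub_A by (intro infsum_nonneg mult_nonneg_nonneg) auto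
  have u'_eq_u: "u' y = u y" if "y \<in> -A" for y
    using that unfolding u'_def by auto
  have u'_exit: "(\<lambda>y. P x y * u' y) summable_on (-A)" "infsum (\<lambda>y. P x y * u' y) (-A) = e x" for x
    using summable_on_cong[of "-A" "\<lambda>y. P x y * u' y" "\<lambda>y. P x y * u y"]
      infsum_cong[of "-A" "\<lambda>y. P x y * u' y" "\<lambda>y. P x y * u y"] u'_eq_u u_exit_summable
    unfolding e_def by auto
  have "-K = (A - K) \<union> -A"
    using K_sub_A by auto
  then have u'_summable: "(\<lambda>y. P x y * u' y) summable_on (-K)" for x
    using summable_on_Un_disjoint[OF _ u'_exit(1), where A="A - K"] finite_A' by auto
  have split: "infsum (\<lambda>y. P x y * u' y) (-K) = (\<Sum>y\<in>A - K. P x y * u' y) + e x" for x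
    using infsum_split_exit(2)[OF u'_summable] u'_exit(2) by simp
  have u_A': "f x + e x + (\<Sum>z\<in>A - K. P x z * u z) \<le> u x" if "x \<in> -K" for x
    using u_drift infsum_split_exit(2)[of x u] that unfolding e_def by force
  have u'_le_u: "u' y \<le> u y" if "y \<in> A - K" for y
    using fundamental_matrix_apply_le[OF that, of "\<lambda>v. f v + e v" u] u_A' that
    unfolding u'_def by (simp add: add.assoc)
  have u'_A': "u' x = f x + e x + (\<Sum>z\<in>A - K. P x z * u' z)" if x: "x \<in> A - K" for x
  proof -
    have "(\<Sum>z\<in>A - K. P x z * u' z) = (\<Sum>z\<in>A - K. P x z * (\<Sum>v\<in>A - K. N z v * (f v + e v)))"
      unfolding u'_def by (intro sum.cong) auto
    then show ?thesis
      using fundamental_matrix_apply_eq[OF x, of "\<lambda>v. f v + e v"] x unfolding u'_def by simp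
  qed
  show ?thesis
  proof (rule that)
    show "u' x \<ge> 0" if "x \<in> -K" for x
      using that u_nonneg fundamental_matrix_nonneg f_nonneg e_nonneg unfolding u'_def
      by (auto intro!: sum_nonneg mult_nonneg_nonneg add_nonneg_nonneg)
    show "(\<lambda>y. P x y * u' y) summable_on (-K)" for x
      by (rule u'_summable)
    show "infsum (\<lambda>y. P x y * u' y) (-K) \<le> u' x - f x" if x: "x \<in> -K" for x
    proof (cases "x \<in> A")
      case True
      then show ?thesis
        using split[of x] u'_A'[of x] x by simp
    next
      case False
      have "(\<Sum>y\<in>A - K. P x y * u' y) \<le> (\<Sum>y\<in>A - K. P x y * u y)"
        using u'_le_u P_nonneg by (intro sum_mono mult_left_mono) auto
      then show ?thesis
        using split[of x] u_A'[OF x] u'_eq_u[of x] False by simp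
    qed
    show "infsum (\<lambda>y. P x y * u' y) (-K) \<le> p12N P K A f x + h x + p12N P K A h x" if x: "x \<in> K" for x
    proof -
      have "(\<Sum>y\<in>A - K. P x y * u' y) = p12N P K A (\<lambda>v. f v + e v) x"
        unfolding p12N_eq u'_def by (intro sum.cong) auto
      also have "\<dots> \<le> p12N P K A f x + p12N P K A h x"
        unfolding p12N_add[symmetric] using u_exit unfolding e_def by (intro p12N_mono) auto
      moreover have "e x \<le> h x"
        using u_exit x K_sub_A unfolding e_def by blast
      ultimately show ?thesis
        using split[of x] by linarith
    qed
  qed
qed

lemma stationary_le_kappa_tilde:
  fixes f u h :: "'a \<Rightarrow> real"
  assumes stat: "stationary_dist P \<pi>"
    and f_nonneg: "\<And>x. f x \<ge> 0" and u_nonneg: "\<And>x. x \<in> -K \<Longrightarrow> u x \<ge> 0"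
    and u_drift: "\<forall>x\<in>-K. (\<lambda>y. P x y * u y) summable_on (-K) \<and>
                         infsum (\<lambda>y. P x y * u y) (-K) \<le> u x - f x"
    and u_exit: "\<forall>x\<in>A. (\<lambda>y. P x y * u y) summable_on (-A) \<and> infsum (\<lambda>y. P x y * u y) (-A) \<le> h x"
  shows "(\<lambda>y. \<pi> y * f y) summable_on UNIV"
    and "infsum (\<lambda>y. \<pi> y * f y) UNIV \<le> (\<Sum>x\<in>K. \<pi> x * kappa_tilde P K A f h x)"
proof -
  obtain u' where u'_nonneg: "\<And>x. x \<in> -K \<Longrightarrow> u' x \<ge> 0"
    and u'_summable: "\<And>x. (\<lambda>y. P x y * u' y) summable_on (-K)"
    and u'_drift: "\<And>x. x \<in> -K \<Longrightarrow> infsum (\<lambda>y. P x y * u' y) (-K) \<le> u' x - f x"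
    and u'_K: "\<And>x. x \<in> K \<Longrightarrow> infsum (\<lambda>y. P x y * u' y) (-K) \<le> p12N P K A f x + h x + p12N P K A h x"
    using drift_function_on_A'[OF f_nonneg u_nonneg u_drift u_exit] by blast
  have fin: "finite (- (- K))"
    using finite_K by simp
  note off_K = stationary_drift_bound[OF stoch stat fin _ u'_nonneg u'_summable u'_drift]
  have "(\<lambda>y. \<pi> y * f y) summable_on (K \<union> -K)"
    using off_K(1) f_nonneg finite_K by (intro summable_on_Un_disjoint) auto
  then show summable: "(\<lambda>y. \<pi> y * f y) summable_on UNIV"
    by simp
  have "infsum (\<lambda>y. \<pi> y * f y) UNIV = (\<Sum>x\<in>K. \<pi> x * f x) + infsum (\<lambda>y. \<pi> y * f y) (-K)"
    using infsum_Un_disjoint[of "\<lambda>y. \<pi> y * f y" K "-K"] off_K(1) f_nonneg finite_K by simp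
  also have "\<dots> \<le> (\<Sum>x\<in>K. \<pi> x * f x) + (\<Sum>x\<in>K. \<pi> x * (p12N P K A f x + h x + p12N P K A h x))"
  proof -
    have "(\<Sum>x\<in>K. \<pi> x * infsum (\<lambda>y. P x y * u' y) (-K))
        \<le> (\<Sum>x\<in>K. \<pi> x * (p12N P K A f x + h x + p12N P K A h x))"
      using u'_K stationary_dist_nonneg[OF stat] by (intro sum_mono mult_left_mono) auto
    then show ?thesis
      using off_K(2) f_nonneg by simp
  qed
  also have "\<dots> = (\<Sum>x\<in>K. \<pi> x * kappa_tilde P K A f h x)"
    unfolding kappa_tilde_def kappa_low_def by (simp add: sum.distrib[symmetric] algebra_simps)
  finally show "infsum (\<lambda>y. \<pi> y * f y) UNIV \<le> (\<Sum>x\<in>K. \<pi> x * kappa_tilde P K A f h x)" .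
qed

end

section \<open>Bounds on the stationary mean\<close>

lemma divide_between_bounds:
  fixes W n d Lmin Lmax Umin Umax :: real
  assumes "0 \<le> Lmin" "0 < Lmax" "0 < Umin" "0 < d"
    and "W * Lmin \<le> n" "n \<le> W * Umax" "W * Umin \<le> d" "d \<le> W * Lmax"
  shows "Lmin / Lmax \<le> n / d" and "n / d \<le> Umax / Umin"
proof -
  have W: "W > 0"
    using assms(2,4,8) by (metis linorder_not_less mult_nonpos_nonneg order.strict_trans2 less_imp_le not_le)
  have n_nonneg: "0 \<le> n"
    using assms(1,5) W by (meson mult_nonneg_nonneg less_imp_le order.trans)
  have "Lmin / Lmax = (W * Lmin) / (W * Lmax)"
    using W by simp
  also have "\<dots> \<le> n / d"
    using assms W n_nonneg by (intro frac_le) auto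
  finally show "Lmin / Lmax \<le> n / d" .
  have "n / d \<le> (W * Umax) / (W * Umin)"
    using assms W n_nonneg by (intro frac_le) auto
  also have "\<dots> = Umax / Umin"
    using W by simp
  finally show "n / d \<le> Umax / Umin" .
qed

locale irreducible_block_chain = block_chain +
  assumes K_nonempty: "K \<noteq> {}"
    and G_irreducible: "irreducible_on K (exit_G P K A)"
    and G_nonsingular: "nonsingular_on K (\<lambda>x y. idm x y - exit_G P K A x y)"
begin

abbreviation "Ginv \<equiv> inv_on K (\<lambda>x y. idm x y - exit_G P K A x y)"

lemma Ginv_is_inverse: "is_inverse_on K (\<lambda>x y. idm x y - exit_G P K A x y) Ginv"
  using finite_K G_nonsingular by (rule inv_on_is_inverse)

lemma Ginv_nonneg: "x \<in> K \<Longrightarrow> y \<in> K \<Longrightarrow> Ginv x y \<ge> 0"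
  using finite_K exit_G_nonneg exit_G_row_sum_le_1 G_irreducible Ginv_is_inverse
  by (rule irreducible_substochastic_inverse_nonneg)

lemma Ginv_row_sum_pos:
  assumes "x \<in> K"
  shows "(\<Sum>y\<in>K. Ginv x y) > 0"
proof -
  have "1 \<le> Ginv x x"
    using finite_K exit_G_nonneg Ginv_nonneg Ginv_is_inverse assms by (rule inverse_diag_ge_one)
  also have "\<dots> \<le> (\<Sum>y\<in>K. Ginv x y)"
    using finite_K assms Ginv_nonneg by (intro member_le_sum) auto
  finally show ?thesis
    by simp
qed

lemma tau_dot_eq: "tau_dot P K A x q = (\<Sum>y\<in>K. Ginv x y * q y) / (\<Sum>y\<in>K. Ginv x y)"
  unfolding tau_dot_def tau_def Let_def by (simp add: sum_divide_distrib)

lemma tau_dot_const: "x \<in> K \<Longrightarrow> tau_dot P K A x (\<lambda>_. c) = c"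
  using Ginv_row_sum_pos[of x] unfolding tau_dot_eq by (simp add: sum_distrib_right[symmetric])

lemma tau_dot_mono:
  assumes "x \<in> K" "\<And>y. y \<in> K \<Longrightarrow> q y \<le> q' y"
  shows "tau_dot P K A x q \<le> tau_dot P K A x q'"
  unfolding tau_dot_eq using assms Ginv_nonneg Ginv_row_sum_pos[OF assms(1)]
  by (intro divide_right_mono sum_mono mult_left_mono) auto

lemma tau_dot_ge: "x \<in> K \<Longrightarrow> (\<And>y. y \<in> K \<Longrightarrow> c \<le> q y) \<Longrightarrow> c \<le> tau_dot P K A x q"
  using tau_dot_mono[of x "\<lambda>_. c" q] tau_dot_const by simp

text \<open>Normalising the rows of (I - G)^-1 in \<phi> = (\<phi> (I - G)) (I - G)^-1, whose defect
  \<phi> (I - G) is nonnegative, exhibits \<phi> as a nonnegative mixture of the \<tau>_x.\<close>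

lemma superharmonic_tau_mixture:
  assumes super: "\<And>y. y \<in> K \<Longrightarrow> (\<Sum>x\<in>K. \<phi> x * exit_G P K A x y) \<le> \<phi> y"
  obtains \<omega> where "\<And>x. x \<in> K \<Longrightarrow> \<omega> x \<ge> 0"
    and "\<And>q. (\<Sum>y\<in>K. \<phi> y * q y) = (\<Sum>x\<in>K. \<omega> x * tau_dot P K A x q)"
proof -
  define c where "c x = (\<Sum>z\<in>K. \<phi> z * (idm z x - exit_G P K A z x))" for x
  have c_nonneg: "c x \<ge> 0" if "x \<in> K" for x
    unfolding c_def using super[OF that] sum_mult_idm_minus[OF finite_K that] by simp
  have \<phi>_eq: "\<phi> y = (\<Sum>x\<in>K. c x * Ginv x y)" if "y \<in> K" for y
    unfolding c_def using is_inverse_on_row_apply[OF finite_K Ginv_is_inverse that] by simp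
  show ?thesis
  proof (rule that)
    show "c x * (\<Sum>y\<in>K. Ginv x y) \<ge> 0" if "x \<in> K" for x
      using c_nonneg[OF that] Ginv_row_sum_pos[OF that] by simp
    fix q
    have "(\<Sum>y\<in>K. \<phi> y * q y) = (\<Sum>x\<in>K. c x * (\<Sum>y\<in>K. Ginv x y * q y))"
      using \<phi>_eq by (simp add: sum_mult_sum_assoc)
    also have "\<dots> = (\<Sum>x\<in>K. c x * (\<Sum>y\<in>K. Ginv x y) * tau_dot P K A x q)"
      unfolding tau_dot_eq using Ginv_row_sum_pos by (intro sum.cong) (auto simp: less_imp_neq[symmetric])
    finally show "(\<Sum>y\<in>K. \<phi> y * q y) = (\<Sum>x\<in>K. c x * (\<Sum>y\<in>K. Ginv x y) * tau_dot P K A x q)" .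
  qed
qed

lemma superharmonic_sum_bounds:
  assumes "\<And>y. y \<in> K \<Longrightarrow> (\<Sum>x\<in>K. \<phi> x * exit_G P K A x y) \<le> \<phi> y"
  shows "(\<Sum>x\<in>K. \<phi> x) * Min ((\<lambda>x. tau_dot P K A x q) ` K) \<le> (\<Sum>y\<in>K. \<phi> y * q y)"
    and "(\<Sum>y\<in>K. \<phi> y * q y) \<le> (\<Sum>x\<in>K. \<phi> x) * Max ((\<lambda>x. tau_dot P K A x q) ` K)"
proof -
  obtain \<omega> where \<omega>_nonneg: "\<And>x. x \<in> K \<Longrightarrow> \<omega> x \<ge> 0"
    and mixture: "\<And>q. (\<Sum>y\<in>K. \<phi> y * q y) = (\<Sum>x\<in>K. \<omega> x * tau_dot P K A x q)"
    using superharmonic_tau_mixture[OF assms] by blast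
  have mass: "(\<Sum>x\<in>K. \<phi> x) = (\<Sum>x\<in>K. \<omega> x)"
    using mixture[of "\<lambda>_. 1"] tau_dot_const by simp
  show "(\<Sum>x\<in>K. \<phi> x) * Min ((\<lambda>x. tau_dot P K A x q) ` K) \<le> (\<Sum>y\<in>K. \<phi> y * q y)"
    unfolding mass mixture sum_distrib_right
    using finite_K \<omega>_nonneg by (intro sum_mono mult_left_mono) auto
  show "(\<Sum>y\<in>K. \<phi> y * q y) \<le> (\<Sum>x\<in>K. \<phi> x) * Max ((\<lambda>x. tau_dot P K A x q) ` K)"
    unfolding mass mixture sum_distrib_right
    using finite_K \<omega>_nonneg by (intro sum_mono mult_left_mono) auto
qed

lemma ratio_between_bounds:
  assumes r_nonneg: "\<forall>x. r x \<ge> 0" and h_nonneg: "\<forall>x\<in>A. h1 x \<ge> 0 \<and> h2 x \<ge> 0"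
    and super: "\<And>y. y \<in> K \<Longrightarrow> (\<Sum>x\<in>K. \<phi> x * exit_G P K A x y) \<le> \<phi> y"
    and d_pos: "0 < d"
    and n_bounds: "(\<Sum>x\<in>K. \<phi> x * kappa_low P K A r x) \<le> n"
      "n \<le> (\<Sum>x\<in>K. \<phi> x * kappa_tilde P K A r h1 x)"
    and d_bounds: "(\<Sum>x\<in>K. \<phi> x * kappa_low P K A (\<lambda>_. 1) x) \<le> d"
      "d \<le> (\<Sum>x\<in>K. \<phi> x * kappa_tilde P K A (\<lambda>_. 1) h2 x)"
  shows "lower_bound P K A r h2 \<le> n / d" and "n / d \<le> upper_bound P K A r h1"
proof -
  let ?Lmin = "Min ((\<lambda>x. tau_dot P K A x (kappa_low P K A r)) ` K)"
  let ?Lmax = "Max ((\<lambda>x. tau_dot P K A x (kappa_tilde P K A (\<lambda>_. 1) h2)) ` K)"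
  let ?Umin = "Min ((\<lambda>x. tau_dot P K A x (kappa_low P K A (\<lambda>_. 1))) ` K)"
  let ?Umax = "Max ((\<lambda>x. tau_dot P K A x (kappa_tilde P K A r h1)) ` K)"
  have kappa_low_r: "kappa_low P K A r x \<ge> 0" for x
    unfolding kappa_low_def using r_nonneg p12N_nonneg[of r x] by auto
  have kappa_low_1: "kappa_low P K A (\<lambda>_. 1) x \<ge> 1" for x
    unfolding kappa_low_def using p12N_nonneg[of "\<lambda>_. 1" x] by auto
  have kappa_tilde_2: "kappa_tilde P K A (\<lambda>_. 1) h2 x \<ge> 1" if "x \<in> K" for x
  proof -
    have "h2 x \<ge> 0" "p12N P K A h2 x \<ge> 0"
      using h_nonneg that K_sub_A by (auto intro: p12N_nonneg)
    then show ?thesis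
      unfolding kappa_tilde_def using kappa_low_1[of x] by linarith
  qed
  obtain x0 where x0: "x0 \<in> K"
    using K_nonempty by blast
  have "0 \<le> ?Lmin"
    using finite_K K_nonempty tau_dot_ge kappa_low_r by (subst Min_ge_iff) auto
  moreover have "0 < ?Lmax"
  proof -
    have "1 \<le> tau_dot P K A x0 (kappa_tilde P K A (\<lambda>_. 1) h2)"
      using tau_dot_ge[OF x0] kappa_tilde_2 by blast
    also have "\<dots> \<le> ?Lmax"
      using finite_K x0 by (intro Max_ge) auto
    finally show ?thesis
      by simp
  qed
  moreover have "0 < ?Umin"
    using finite_K K_nonempty tau_dot_ge kappa_low_1 by (subst Min_gr_iff) (auto intro: less_le_trans[OF zero_less_one])
  ultimately have "?Lmin / ?Lmax \<le> n / d \<and> n / d \<le> ?Umax / ?Umin"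
    using divide_between_bounds[of ?Lmin ?Lmax ?Umin d "\<Sum>x\<in>K. \<phi> x" n ?Umax] d_pos
      superharmonic_sum_bounds[OF super] n_bounds d_bounds order.trans by meson
  then show "lower_bound P K A r h2 \<le> n / d" and "n / d \<le> upper_bound P K A r h1"
    unfolding lower_bound_def upper_bound_def by auto
qed

lemma stationary_between_bounds:
  fixes u h1 h2 :: "'a \<Rightarrow> real"
  assumes stat: "stationary_dist P \<pi>" and r_nonneg: "\<forall>x. r x \<ge> 0"
    and h_nonneg: "\<forall>x\<in>A. h1 x \<ge> 0 \<and> h2 x \<ge> 0" and u_nonneg: "\<forall>x\<in>-K. u x \<ge> 0"
    and u_drift: "\<forall>x\<in>-K. (\<lambda>y. P x y * u y) summable_on (-K) \<and>
                         infsum (\<lambda>y. P x y * u y) (-K) \<le> u x - r x"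
    and u_exit: "\<forall>x\<in>A. (\<lambda>y. P x y * u y) summable_on (-A) \<and> infsum (\<lambda>y. P x y * u y) (-A) \<le> h1 x"
    and g_exit: "\<forall>x\<in>A. (\<lambda>y. P x y * g y) summable_on (-A) \<and> infsum (\<lambda>y. P x y * g y) (-A) \<le> h2 x"
  shows "(\<lambda>x. \<pi> x * r x) summable_on UNIV"
    and "lower_bound P K A r h2 \<le> infsum (\<lambda>x. \<pi> x * r x) UNIV"
    and "infsum (\<lambda>x. \<pi> x * r x) UNIV \<le> upper_bound P K A r h1"
proof -
  have mass: "infsum (\<lambda>x. \<pi> x * 1) UNIV = 1"
    using stat unfolding stationary_dist_def by (simp add: infsumI)
  note r_bound = stationary_le_kappa_tilde[OF stat _ _ u_drift u_exit]
  note one_bound = stationary_le_kappa_tilde[OF stat _ _ g_drift g_exit]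
  show summable: "(\<lambda>x. \<pi> x * r x) summable_on UNIV"
    using r_bound(1) r_nonneg u_nonneg by blast
  have "(\<Sum>x\<in>K. \<pi> x * kappa_low P K A r x) \<le> infsum (\<lambda>x. \<pi> x * r x) UNIV"
    using kappa_low_le_stationary[OF stat _ summable] r_nonneg by blast
  moreover have "infsum (\<lambda>x. \<pi> x * r x) UNIV \<le> (\<Sum>x\<in>K. \<pi> x * kappa_tilde P K A r h1 x)"
    using r_bound(2) r_nonneg u_nonneg by blast
  moreover have "(\<Sum>x\<in>K. \<pi> x * kappa_low P K A (\<lambda>_. 1) x) \<le> 1"
    using kappa_low_le_stationary[OF stat, of "\<lambda>_. 1"] one_bound(1) g_nonneg mass by simp
  moreover have "1 \<le> (\<Sum>x\<in>K. \<pi> x * kappa_tilde P K A (\<lambda>_. 1) h2 x)"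
    using one_bound(2) g_nonneg mass by simp
  ultimately show "lower_bound P K A r h2 \<le> infsum (\<lambda>x. \<pi> x * r x) UNIV"
    and "infsum (\<lambda>x. \<pi> x * r x) UNIV \<le> upper_bound P K A r h1"
    using ratio_between_bounds[OF r_nonneg h_nonneg stationary_exit_G_superharmonic[OF stat] zero_less_one]
    by simp_all
qed

lemma P2_stationary_between_bounds:
  assumes r_nonneg: "\<forall>x. r x \<ge> 0" and h_nonneg: "\<forall>x\<in>A. h1 x \<ge> 0 \<and> h2 x \<ge> 0"
    and st: "stationary_on K (P2 P K A) \<mu>"
  shows "lower_bound P K A r h2 \<le> pi2_tilde P K A \<mu> r"
    and "pi2_tilde P K A \<mu> r \<le> upper_bound P K A r h1"
proof -
  have \<mu>_nonneg: "\<And>x. x \<in> K \<Longrightarrow> \<mu> x \<ge> 0" and \<mu>_mass: "(\<Sum>x\<in>K. \<mu> x) = 1"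
    using st unfolding stationary_on_def by blast+
  have super: "(\<Sum>x\<in>K. \<mu> x * exit_G P K A x y) \<le> \<mu> y" if y: "y \<in> K" for y
  proof -
    have "(\<Sum>x\<in>K. \<mu> x * exit_G P K A x y) \<le> (\<Sum>x\<in>K. \<mu> x * P2 P K A x y)"
      using \<mu>_nonneg exit_G_le_P2 y by (intro sum_mono mult_left_mono) auto
    also have "\<dots> = \<mu> y"
      using st y unfolding stationary_on_def by blast
    finally show ?thesis .
  qed
  have h_terms: "h x + p12N P K A h x \<ge> 0" if "x \<in> K" "h = h1 \<or> h = h2" for x h
    using h_nonneg that K_sub_A by (auto intro!: add_nonneg_nonneg p12N_nonneg)
  have "1 \<le> (\<Sum>x\<in>K. \<mu> x * kappa_low P K A (\<lambda>_. 1) x)"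
  proof -
    have "(\<Sum>x\<in>K. \<mu> x * 1) \<le> (\<Sum>x\<in>K. \<mu> x * kappa_low P K A (\<lambda>_. 1) x)"
      unfolding kappa_low_def using \<mu>_nonneg p12N_nonneg by (intro sum_mono mult_left_mono) auto
    then show ?thesis
      using \<mu>_mass by simp
  qed
  then have "lower_bound P K A r h2 \<le> pi2_tilde P K A \<mu> r \<and> pi2_tilde P K A \<mu> r \<le> upper_bound P K A r h1"
    unfolding pi2_tilde_def using \<mu>_nonneg h_terms
    by (intro conjI ratio_between_bounds[OF r_nonneg h_nonneg super])
      (auto simp: kappa_tilde_def intro!: sum_mono mult_left_mono)
  then show "lower_bound P K A r h2 \<le> pi2_tilde P K A \<mu> r"
    and "pi2_tilde P K A \<mu> r \<le> upper_bound P K A r h1"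
    by simp_all
qed

end

theorem mainTheorem3:
  fixes P :: "'a::countable \<Rightarrow> 'a \<Rightarrow> real"
    and \<pi> r g1 g2 h1 h2 :: "'a \<Rightarrow> real"
    and K A :: "'a set"
  assumes stoch: "stochastic P"
    and irr: "irreducible_chain P"
    and posrec: "positive_recurrent P"
    and stat: "stationary_dist P \<pi>"
    and finA: "finite A" and KA: "K \<subseteq> A" and Kne: "K \<noteq> {}"
    and Girr: "irreducible_on K (exit_G P K A)"
    and Gns: "nonsingular_on K (\<lambda>x y. idm x y - exit_G P K A x y)"
    and r_nonneg: "\<forall>x. r x \<ge> 0"
    and g_nonneg: "\<forall>x\<in>-K. g1 x \<ge> 0 \<and> g2 x \<ge> 0"
    and h_nonneg: "\<forall>x\<in>A. h1 x \<ge> 0 \<and> h2 x \<ge> 0"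
    and drift1: "\<forall>x\<in>-K. (\<lambda>y. P x y * g1 y) summable_on (-K) \<and>
                        infsum (\<lambda>y. P x y * g1 y) (-K) \<le> g1 x - r x"
    and drift2: "\<forall>x\<in>-K. (\<lambda>y. P x y * g2 y) summable_on (-K) \<and>
                        infsum (\<lambda>y. P x y * g2 y) (-K) \<le> g2 x - 1"
    and exit1: "\<forall>x\<in>A. (\<lambda>y. P x y * g1 y) summable_on (-A) \<and>
                        infsum (\<lambda>y. P x y * g1 y) (-A) \<le> h1 x"
    and exit2: "\<forall>x\<in>A. (\<lambda>y. P x y * g2 y) summable_on (-A) \<and>
                        infsum (\<lambda>y. P x y * g2 y) (-A) \<le> h2 x"
  shows "(\<lambda>x. \<pi> x * r x) summable_on UNIV \<and>
         lower_bound P K A r h2 \<le> infsum (\<lambda>x. \<pi> x * r x) UNIV \<and>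
         infsum (\<lambda>x. \<pi> x * r x) UNIV \<le> upper_bound P K A r h1 \<and>
         (\<forall>\<pi>2. stationary_on K (P2 P K A) \<pi>2 \<longrightarrow>
            lower_bound P K A r h2 \<le> pi2_tilde P K A \<pi>2 r \<and>
            pi2_tilde P K A \<pi>2 r \<le> upper_bound P K A r h1 \<and>
            \<bar>pi2_tilde P K A \<pi>2 r - infsum (\<lambda>x. \<pi> x * r x) UNIV\<bar>
              \<le> upper_bound P K A r h1 - lower_bound P K A r h2)"
proof -
  interpret chain: irreducible_block_chain P K A g2
    using stoch finA KA Kne Girr Gns g_nonneg drift2 by unfold_locales auto
  have g1_nonneg: "\<forall>x\<in>-K. g1 x \<ge> 0"
    using g_nonneg by blast
  note \<pi>_bounds = chain.stationary_between_bounds[OF stat r_nonneg h_nonneg g1_nonneg drift1 exit1 exit2]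
  note \<pi>2_bounds = chain.P2_stationary_between_bounds[OF r_nonneg h_nonneg]
  show ?thesis
  proof (intro conjI allI impI \<pi>_bounds)
    fix \<mu> assume "stationary_on K (P2 P K A) \<mu>"
    note \<mu>_bounds = \<pi>2_bounds[OF this]
    show "lower_bound P K A r h2 \<le> pi2_tilde P K A \<mu> r" "pi2_tilde P K A \<mu> r \<le> upper_bound P K A r h1"
      by (fact \<mu>_bounds)+
    show "\<bar>pi2_tilde P K A \<mu> r - infsum (\<lambda>x. \<pi> x * r x) UNIV\<bar>
        \<le> upper_bound P K A r h1 - lower_bound P K A r h2"
      unfolding abs_le_iff using \<pi>_bounds(2,3) \<mu>_bounds by linarith
  qed
qed

end
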